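(* Let $P$ be a linear process, $a$ a name, and suppose $\mathrm{cin}(a,P)$ (respectively $\mathrm{cout}(a,P)$) and $P\to^* Q$. Then exactly one of the following holds: (1) $\mathrm{cin}(a,Q)$ (respectively $\mathrm{cout}(a,Q)$); (2) $a\notin\mathcal{N}(Q)$ and there exist processes $R_a, R'_a$ with $P\to^* R_a\to R'_a\to^* Q$, $a\notin\mathcal{N}(R'_a)$, $\mathcal{N}(R'_a)\cup\{a\}=\mathcal{N}(R_a)$, and $\mathrm{sync}(a,R_a)$.
   Context: Processes: $P ::= \mathbf{0} \mid \alpha.P \mid P\,|\,Q$ where $\alpha$ is a name $a$ or a co-name $\bar a$ (with $\bar{\bar a}=a$). Structural congruence $\equiv$ is the smallest congruence with $P|\mathbf{0}\equiv P$, $P|Q\equiv Q|P$, $P|(Q|R)\equiv(P|Q)|R$. Reduction $\to$ is the smallest relation with $a.P\,|\,\bar a.Q\to P\,|\,Q$, closed under parallel contexts and under $\equiv$; $\to^*$ is its reflexive–transitive closure. A process is linear if each name occurs at most once as an input $a$ and at most once as an output $\bar a$. $\mathcal{N}(P)$ is the set of names occurring in $P$ (as $a$ or $\bar a$). Process contexts: $C ::= [-] \mid P\,|\,C \mid C\,|\,P \mid \alpha.C$, with $C[Q]$ the result of filling the hole with $Q$. $\mathrm{in}(a,Q)$ iff $\exists Q',Q''.\ Q\equiv Q'\,|\,a.Q''$; $\mathrm{out}(a,Q)$ iff $\exists Q',Q''.\ Q\equiv Q'\,|\,\bar a.Q''$; $\mathrm{sync}(a,Q)$ iff both hold. $\mathrm{cin}(a,P)$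 iff there exist a process context $C$ and $Q$ with $P\equiv C[Q]$ and $\mathrm{in}(a,Q)$; $\mathrm{cout}(a,P)$ likewise with $\mathrm{out}(a,Q)$. *)

theory Defs
  imports Main
begin

datatype 'n act = In 'n | Out 'n

datatype 'n proc = Nil | Pre "'n act" "'n proc" | Par "'n proc" "'n proc"

inductive scong :: "'n proc \<Rightarrow> 'n proc \<Rightarrow> bool" (infix "\<equiv>\<^sub>s" 50) where
  par_nil: "Par P Nil \<equiv>\<^sub>s P"
| par_comm: "Par P Q \<equiv>\<^sub>s Par Q P"
| par_assoc: "Par P (Par Q R) \<equiv>\<^sub>s Par (Par P Q) R"
| refl: "P \<equiv>\<^sub>s P"
| sym: "P \<equiv>\<^sub>s Q \<Longrightarrow> Q \<equiv>\<^sub>s P"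
| trans: "P \<equiv>\<^sub>s Q \<Longrightarrow> Q \<equiv>\<^sub>s R \<Longrightarrow> P \<equiv>\<^sub>s R"
| cong_pre: "P \<equiv>\<^sub>s Q \<Longrightarrow> Pre \<alpha> P \<equiv>\<^sub>s Pre \<alpha> Q"
| cong_parL: "P \<equiv>\<^sub>s Q \<Longrightarrow> Par P R \<equiv>\<^sub>s Par Q R"
| cong_parR: "P \<equiv>\<^sub>s Q \<Longrightarrow> Par R P \<equiv>\<^sub>s Par R Q"

inductive red :: "'n proc \<Rightarrow> 'n proc \<Rightarrow> bool" (infix "\<longmapsto>" 50) where
  comm: "Par (Pre (In a) P) (Pre (Out a) Q) \<longmapsto> Par P Q"
| parL: "P \<longmapsto> P' \<Longrightarrow> Par P Q \<longmapsto> Par P' Q"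
| parR: "Q \<longmapsto> Q' \<Longrightarrow> Par P Q \<longmapsto> Par P Q'"
| struct: "P \<equiv>\<^sub>s P' \<Longrightarrow> P' \<longmapsto> Q' \<Longrightarrow> Q' \<equiv>\<^sub>s Q \<Longrightarrow> P \<longmapsto> Q"

abbreviation reds :: "'n proc \<Rightarrow> 'n proc \<Rightarrow> bool" (infix "\<longmapsto>\<^sup>*" 50) where
  "P \<longmapsto>\<^sup>* Q \<equiv> red\<^sup>*\<^sup>* P Q"

fun count_in :: "'n \<Rightarrow> 'n proc \<Rightarrow> nat" where
  "count_in a Nil = 0"
| "count_in a (Pre \<alpha> P) = (if \<alpha> = In a then 1 else 0) + count_in a P"
| "count_in a (Par P Q) = count_in a P + count_in a Q"

fun count_out :: "'n \<Rightarrow> 'n proc \<Rightarrow> nat" where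
  "count_out a Nil = 0"
| "count_out a (Pre \<alpha> P) = (if \<alpha> = Out a then 1 else 0) + count_out a P"
| "count_out a (Par P Q) = count_out a P + count_out a Q"

definition linear :: "'n proc \<Rightarrow> bool" where
  "linear P \<longleftrightarrow> (\<forall>a. count_in a P \<le> 1 \<and> count_out a P \<le> 1)"

fun act_name :: "'n act \<Rightarrow> 'n" where
  "act_name (In a) = a" | "act_name (Out a) = a"

fun names :: "'n proc \<Rightarrow> 'n set" where
  "names Nil = {}"
| "names (Pre \<alpha> P) = insert (act_name \<alpha>) (names P)"
| "names (Par P Q) = names P \<union> names Q"

datatype 'n ctx = Hole | CParL "'n proc" "'n ctx" | CParR "'n ctx" "'n proc" | CPre "'n act" "'n ctx"

fun fill :: "'n ctx \<Rightarrow> 'n proc \<Rightarrow> 'n proc" where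
  "fill Hole Q = Q"
| "fill (CParL P C) Q = Par P (fill C Q)"
| "fill (CParR C P) Q = Par (fill C Q) P"
| "fill (CPre \<alpha> C) Q = Pre \<alpha> (fill C Q)"

definition inp :: "'n \<Rightarrow> 'n proc \<Rightarrow> bool" where
  "inp a Q \<longleftrightarrow> (\<exists>Q' Q''. Q \<equiv>\<^sub>s Par Q' (Pre (In a) Q''))"

definition outp :: "'n \<Rightarrow> 'n proc \<Rightarrow> bool" where
  "outp a Q \<longleftrightarrow> (\<exists>Q' Q''. Q \<equiv>\<^sub>s Par Q' (Pre (Out a) Q''))"

definition sync :: "'n \<Rightarrow> 'n proc \<Rightarrow> bool" where
  "sync a Q \<longleftrightarrow> inp a Q \<and> outp a Q"

definition cin :: "'n \<Rightarrow> 'n proc \<Rightarrow> bool" where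
  "cin a P \<longleftrightarrow> (\<exists>C Q. P \<equiv>\<^sub>s fill C Q \<and> inp a Q)"

definition cout :: "'n \<Rightarrow> 'n proc \<Rightarrow> bool" where
  "cout a P \<longleftrightarrow> (\<exists>C Q. P \<equiv>\<^sub>s fill C Q \<and> outp a Q)"

end

theory Submission
  imports Defs
begin

text \<open>Occurrence counts of prefixes are invariant under structural congruence, and cin,
cout just say that the corresponding count is positive. Every reduction step is a
synchronisation on some name b removing exactly one input and one output on b. So a name
disappears exactly at a synchronisation on it, and its input count minus its output count is
preserved; in a linear process the input (output) on a therefore vanishes only together with
the name a itself.\<close>

fun count_act :: "'n act \<Rightarrow> 'n proc \<Rightarrow> nat" where
  "count_act \<alpha> Nil = 0"
| "count_act \<alpha> (Pre \<beta> P) = (if \<beta> = \<alpha> then 1 else 0) + count_act \<alpha> P"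
| "count_act \<alpha> (Par P Q) = count_act \<alpha> P + count_act \<alpha> Q"

lemma count_in_eq_count_act: "count_in a P = count_act (In a) P"
  by (induction P) auto

lemma count_out_eq_count_act: "count_out a P = count_act (Out a) P"
  by (induction P) auto

lemma linear_iff_count_act: "linear P \<longleftrightarrow> (\<forall>\<alpha>. count_act \<alpha> P \<le> 1)"
  unfolding linear_def count_in_eq_count_act count_out_eq_count_act by (metis act.exhaust)

lemma names_iff_count_act:
  "a \<in> names P \<longleftrightarrow> count_act (In a) P > 0 \<or> count_act (Out a) P > 0"
proof (induction P)
  case (Pre \<beta> P) then show ?case by (cases \<beta>) auto
qed auto

lemma scong_count_act: "P \<equiv>\<^sub>s Q \<Longrightarrow> count_act \<alpha> P = count_act \<alpha> Q"
  by (induction rule: scong.induct) auto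

lemma count_act_fill_ge: "count_act \<alpha> Q \<le> count_act \<alpha> (fill C Q)"
  by (induction C) auto

lemma count_act_pos_imp_fill_Pre:
  "count_act \<alpha> P > 0 \<Longrightarrow> \<exists>C X. P = fill C (Pre \<alpha> X)"
proof (induction P)
  case (Pre \<beta> P)
  show ?case
  proof (cases "\<beta> = \<alpha>")
    case True
    then have "Pre \<beta> P = fill Hole (Pre \<alpha> P)" by simp
    then show ?thesis by blast
  next
    case False
    with Pre obtain C X where "P = fill C (Pre \<alpha> X)" by auto
    then have "Pre \<beta> P = fill (CPre \<beta> C) (Pre \<alpha> X)" by simp
    then show ?thesis by blast
  qed
next
  case (Par P1 P2)
  show ?case
  proof (cases "count_act \<alpha> P1 > 0")
    case True
    with Par obtain C X where "P1 = fill C (Pre \<alpha> X)" by blast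
    then have "Par P1 P2 = fill (CParR C P2) (Pre \<alpha> X)" by simp
    then show ?thesis by blast
  next
    case False
    with Par obtain C X where "P2 = fill C (Pre \<alpha> X)" by auto
    then have "Par P1 P2 = fill (CParL P1 C) (Pre \<alpha> X)" by simp
    then show ?thesis by blast
  qed
qed simp

lemma Pre_scong_Par_Nil: "Pre \<alpha> X \<equiv>\<^sub>s Par Nil (Pre \<alpha> X)"
  by (meson scong.par_comm scong.par_nil scong.sym scong.trans)

lemma count_act_pos_iff_context:
  "count_act \<alpha> P > 0 \<longleftrightarrow> (\<exists>C Q Q' Q''. P \<equiv>\<^sub>s fill C Q \<and> Q \<equiv>\<^sub>s Par Q' (Pre \<alpha> Q''))"
proof
  assume "count_act \<alpha> P > 0"
  then obtain C X where "P = fill C (Pre \<alpha> X)" using count_act_pos_imp_fill_Pre by blast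
  then show "\<exists>C Q Q' Q''. P \<equiv>\<^sub>s fill C Q \<and> Q \<equiv>\<^sub>s Par Q' (Pre \<alpha> Q'')"
    using scong.refl Pre_scong_Par_Nil by blast
next
  assume "\<exists>C Q Q' Q''. P \<equiv>\<^sub>s fill C Q \<and> Q \<equiv>\<^sub>s Par Q' (Pre \<alpha> Q'')"
  then obtain C Q Q' Q'' where "P \<equiv>\<^sub>s fill C Q" and "Q \<equiv>\<^sub>s Par Q' (Pre \<alpha> Q'')" by blast
  then have "count_act \<alpha> P = count_act \<alpha> (fill C Q)" and "count_act \<alpha> Q > 0"
    by (simp_all add: scong_count_act)
  then show "count_act \<alpha> P > 0" using count_act_fill_ge[of \<alpha> Q C] by linarith
qed

lemma cin_iff_count_act: "cin a P \<longleftrightarrow> count_act (In a) P > 0"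
  unfolding cin_def inp_def count_act_pos_iff_context by blast

lemma cout_iff_count_act: "cout a P \<longleftrightarrow> count_act (Out a) P > 0"
  unfolding cout_def outp_def count_act_pos_iff_context by blast

lemma sync_scong: "P \<equiv>\<^sub>s P' \<Longrightarrow> sync b P' \<Longrightarrow> sync b P"
  unfolding sync_def inp_def outp_def by (meson scong.trans)

lemma sync_parL: "sync b P \<Longrightarrow> sync b (Par P Q)"
  unfolding sync_def inp_def outp_def
  by (meson scong.cong_parL scong.par_assoc scong.par_comm scong.trans)

lemma sync_parR: "sync b Q \<Longrightarrow> sync b (Par P Q)"
  by (meson sync_parL sync_scong scong.par_comm)

lemma act_name_eq_iff: "act_name \<alpha> = a \<longleftrightarrow> \<alpha> = In a \<or> \<alpha> = Out a"
  by (cases \<alpha>) auto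

lemma red_consumes_sync:
  "R \<longmapsto> R' \<Longrightarrow> \<exists>b. sync b R \<and>
     (\<forall>\<alpha>. count_act \<alpha> R = count_act \<alpha> R' + (if act_name \<alpha> = b then 1 else 0))"
proof (induction rule: red.induct)
  case (comm a P Q)
  have "sync a (Par (Pre (In a) P) (Pre (Out a) Q))"
    unfolding sync_def inp_def outp_def using scong.par_comm scong.refl by blast
  then show ?case by (intro exI[of _ a]) (auto simp: act_name_eq_iff)
next
  case (parL P P' Q) then show ?case using sync_parL by fastforce
next
  case (parR Q Q' P) then show ?case using sync_parR by fastforce
next
  case (struct P P' Q' Q) then show ?case using sync_scong scong_count_act by metis
qed

lemma reds_count_balance:
  "P \<longmapsto>\<^sup>* Q \<Longrightarrow> count_act (In a) P + count_act (Out a) Q = count_act (In a) Q + count_act (Out a) P"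
proof (induction rule: rtranclp_induct)
  case (step R R')
  then obtain b where
    "\<forall>\<alpha>. count_act \<alpha> R = count_act \<alpha> R' + (if act_name \<alpha> = b then 1 else 0)"
    using red_consumes_sync by blast
  then show ?case using step.IH by (cases "a = b") simp_all
qed simp

lemma red_name_vanishes:
  assumes "R \<longmapsto> R'" and "a \<in> names R" and "a \<notin> names R'"
  shows "sync a R \<and> names R' \<union> {a} = names R"
proof -
  obtain b where sync: "sync b R"
    and count: "\<forall>\<alpha>. count_act \<alpha> R = count_act \<alpha> R' + (if act_name \<alpha> = b then 1 else 0)"
    using red_consumes_sync[OF assms(1)] by blast
  have "b = a"
  proof (rule ccontr)
    assume "b \<noteq> a"
    then have "count_act (In a) R = count_act (In a) R'" "count_act (Out a) R = count_act (Out a) R'"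
      using count by simp_all
    then show False using assms(2,3) by (simp add: names_iff_count_act)
  qed
  moreover have "c \<in> names R' \<union> {a} \<longleftrightarrow> c \<in> names R" for c
  proof (cases "c = a")
    case False
    then show ?thesis using count \<open>b = a\<close> by (simp add: names_iff_count_act)
  qed (simp add: assms(2))
  ultimately show ?thesis using sync by blast
qed

lemma reds_name_vanishes:
  assumes "P \<longmapsto>\<^sup>* Q" and "a \<in> names P" and "a \<notin> names Q"
  shows "\<exists>R R'. P \<longmapsto>\<^sup>* R \<and> R \<longmapsto> R' \<and> R' \<longmapsto>\<^sup>* Q \<and>
           a \<notin> names R' \<and> names R' \<union> {a} = names R \<and> sync a R"
  using assms
proof (induction rule: converse_rtranclp_induct)
  case (step P P')
  show ?case
  proof (cases "a \<in> names P'")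
    case True
    then obtain R R' where "P' \<longmapsto>\<^sup>* R" "R \<longmapsto> R'" "R' \<longmapsto>\<^sup>* Q"
      "a \<notin> names R'" "names R' \<union> {a} = names R" "sync a R"
      using step.IH step.prems(2) by blast
    moreover have "P \<longmapsto>\<^sup>* R"
      using step.hyps(1) \<open>P' \<longmapsto>\<^sup>* R\<close> by (rule converse_rtranclp_into_rtranclp)
    ultimately show ?thesis by blast
  next
    case False
    have "sync a P \<and> names P' \<union> {a} = names P"
      using red_name_vanishes[OF step.hyps(1) step.prems(1) False] .
    then show ?thesis using False step.hyps by (intro exI[of _ P] exI[of _ P']) simp
  qed
qed simp

text \<open>Linearity is used only here: the single input on a can be consumed only by the single
output on a, so once one of them is gone the name has disappeared.\<close>

lemma linear_reds_lose_name:
  assumes "linear P" and "P \<longmapsto>\<^sup>* Q" and "count_act \<alpha> P > 0" and "count_act \<alpha> Q = 0"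
  shows "act_name \<alpha> \<notin> names Q"
proof -
  obtain a where a: "act_name \<alpha> = a" "\<alpha> = In a \<or> \<alpha> = Out a"
    by (cases \<alpha>) simp_all
  have "count_act (In a) P + count_act (Out a) Q = count_act (In a) Q + count_act (Out a) P"
    using reds_count_balance[OF assms(2)] .
  moreover have "count_act (In a) P \<le> 1" "count_act (Out a) P \<le> 1"
    using assms(1) by (simp_all add: linear_iff_count_act)
  ultimately show ?thesis using a assms(3,4) by (auto simp: names_iff_count_act)
qed

lemma linear_reds_keeps_action_or_name_vanishes:
  assumes "linear P" and "P \<longmapsto>\<^sup>* Q" and "count_act \<alpha> P > 0" and "act_name \<alpha> = a"
  shows "(count_act \<alpha> Q > 0) \<noteq>
           (a \<notin> names Q \<and> (\<exists>R R'. P \<longmapsto>\<^sup>* R \<and> R \<longmapsto> R' \<and> R' \<longmapsto>\<^sup>* Q \<and>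
              a \<notin> names R' \<and> names R' \<union> {a} = names R \<and> sync a R))"
proof (cases "count_act \<alpha> Q > 0")
  case True
  then have "a \<in> names Q" using assms(4) by (cases \<alpha>) (auto simp: names_iff_count_act)
  with True show ?thesis by blast
next
  case False
  then have "a \<notin> names Q" using linear_reds_lose_name assms by blast
  moreover have "a \<in> names P" using assms(3,4) by (cases \<alpha>) (auto simp: names_iff_count_act)
  ultimately show ?thesis using False reds_name_vanishes[OF assms(2)] by blast
qed

theorem lemma2:
  fixes P Q :: "'n proc" and a :: 'n
  assumes "linear P" and "P \<longmapsto>\<^sup>* Q"
  shows "(cin a P \<longrightarrow>
            (cin a Q \<noteq>
              (a \<notin> names Q \<and> (\<exists>Ra Ra'. P \<longmapsto>\<^sup>* Ra \<and> Ra \<longmapsto> Ra' \<and> Ra' \<longmapsto>\<^sup>* Q \<and>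
                 a \<notin> names Ra' \<and> names Ra' \<union> {a} = names Ra \<and> sync a Ra))))
       \<and> (cout a P \<longrightarrow>
            (cout a Q \<noteq>
              (a \<notin> names Q \<and> (\<exists>Ra Ra'. P \<longmapsto>\<^sup>* Ra \<and> Ra \<longmapsto> Ra' \<and> Ra' \<longmapsto>\<^sup>* Q \<and>
                 a \<notin> names Ra' \<and> names Ra' \<union> {a} = names Ra \<and> sync a Ra))))"
  unfolding cin_iff_count_act cout_iff_count_act
  using linear_reds_keeps_action_or_name_vanishes[OF assms, of "In a" a]
    linear_reds_keeps_action_or_name_vanishes[OF assms, of "Out a" a]
  by simp

end
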